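(* Let $R=[0,1]^2$, $s\in\mathbb{N}$, $u=2^{-s}$, and let $(B_1,B_2)$ be a good box pair. Let $(p,q),(p',q')\in B_1\times B_2$ with $p<q$ and $p'<q'$, and let $\ell,\ell'$ be the lines through $p,q$ and through $p',q'$ respectively. With $\lambda_p,\lambda_q$ the parameters of $p,q$ along $\ell$ and $\lambda_{p'},\lambda_{q'}$ those of $p',q'$ along $\ell'$, we have $|\lambda_p-\lambda_{p'}|\le\sqrt2u+4\sqrt u$ and $|\lambda_q-\lambda_{q'}|\le\sqrt2u+4\sqrt u$. As a consequence, $L=O(\sqrt u)$.
   Context: For $p,q\in\mathbb{R}^2$ write $p\le q$ (resp. $p<q$) if both coordinates satisfy $\le$ (resp. $<$). $R$ is split into $2^s\times2^s$ congruent closed squares ("boxes") of side length $u$. A box pair is an ordered pair $(B_1,B_2)$ of boxes with centers $c_1,c_2$. Let $\mathcal{L}$ be the set of non-vertical lines in $\mathbb{R}^2$ with positive slope; each $\ell\in\mathcal{L}$ meets the line $y=-x$ in a unique point $b$ and is parametrized as $b+\lambda a$ with $a=(a_1,a_2)$ its unit direction vector with positive coordinates; $\hat{\ell}:=\min\{a_1,a_2\}$; for $p\in\ell$, $\lambda_p$ is the parameter with $p=b+\lambda_pa$. A line $\ell\in\mathcal{L}$ traverses $(B_1,B_2)$ if it meets both boxes; $\ell_c$ is the line through $c_1,c_2$. A box pair is null if $c_1\not\le c_2$; close if $c_1\le c_2$ and $\|c_1-c_2\|_2<\sqrt u$; non-diagonal if $c_1\le c_2$, $\|c_1-c_2\|_2\ge\sqrt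 u$, and every traversing $\ell\in\mathcal{L}$ satisfies $\hat{\ell}<u^{1/5}$; good if it is neither null, close, nor non-diagonal. $L_1$ is the supremum of $|\lambda_p-\lambda_{c_1}|$ over traversing lines $\ell$ and points $p\in\ell\cap B_1$ ($\lambda_p$ along $\ell$, $\lambda_{c_1}$ along $\ell_c$), $L_2$ likewise for $B_2$ and $c_2$, and $L:=\max\{L_1,L_2\}$. $O(\sqrt u)$ means bounded by an absolute constant times $\sqrt u$, uniformly over $s$ and good box pairs. *)

theory Defs
  imports "HOL-Analysis.Analysis"
begin

text \<open>Points of the plane are represented as real \<times> real (Euclidean norm/inner product).
  R = [0,1]^2 is split into 2^s \<times> 2^s boxes of side u = 2^(-s).\<close>

definition side :: "nat \<Rightarrow> real" where
  "side s = 1 / 2 ^ s"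

definition grid_box :: "nat \<Rightarrow> nat \<Rightarrow> nat \<Rightarrow> (real \<times> real) set" where
  "grid_box s i j = {real i * side s .. real (i+1) * side s} \<times> {real j * side s .. real (j+1) * side s}"

definition center :: "nat \<Rightarrow> nat \<Rightarrow> nat \<Rightarrow> real \<times> real" where
  "center s i j = ((real i + 1/2) * side s, (real j + 1/2) * side s)"

definition pleq :: "real \<times> real \<Rightarrow> real \<times> real \<Rightarrow> bool" where
  "pleq p q \<longleftrightarrow> fst p \<le> fst q \<and> snd p \<le> snd q"

definition pless :: "real \<times> real \<Rightarrow> real \<times> real \<Rightarrow> bool" where
  "pless p q \<longleftrightarrow> fst p < fst q \<and> snd p < snd q"

text \<open>A line is represented by its base point b on y = -x and unit direction a;
  the line is {b + \<lambda> a}. Lines in \<L>: a has positive coordinates.\<close>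
definition lineof :: "real \<times> real \<Rightarrow> real \<times> real \<Rightarrow> (real \<times> real) set" where
  "lineof b a = range (\<lambda>t. b + t *\<^sub>R a)"

definition inL :: "real \<times> real \<Rightarrow> real \<times> real \<Rightarrow> bool" where
  "inL b a \<longleftrightarrow> fst b = - snd b \<and> norm a = 1 \<and> 0 < fst a \<and> 0 < snd a"

text \<open>Same parametrization allowing nonnegative direction coordinates
  (needed for \<ell>_c, which may be vertical or horizontal).\<close>
definition inLc :: "real \<times> real \<Rightarrow> real \<times> real \<Rightarrow> bool" where
  "inLc b a \<longleftrightarrow> fst b = - snd b \<and> norm a = 1 \<and> 0 \<le> fst a \<and> 0 \<le> snd a"

text \<open>Parameter of a point p along the line (b,a): p = b + lam b a p *R a for p on the line.\<close>
definition lam :: "real \<times> real \<Rightarrow> real \<times> real \<Rightarrow> real \<times> real \<Rightarrow> real" where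
  "lam b a p = inner (p - b) a"

definition hat :: "real \<times> real \<Rightarrow> real" where
  "hat a = min (fst a) (snd a)"

definition traverses :: "(real \<times> real) set \<Rightarrow> (real \<times> real) set \<Rightarrow> real \<times> real \<Rightarrow> real \<times> real \<Rightarrow> bool" where
  "traverses B1 B2 b a \<longleftrightarrow> inL b a \<and> lineof b a \<inter> B1 \<noteq> {} \<and> lineof b a \<inter> B2 \<noteq> {}"

definition null_pair :: "nat \<Rightarrow> nat \<Rightarrow> nat \<Rightarrow> nat \<Rightarrow> nat \<Rightarrow> bool" where
  "null_pair s i1 j1 i2 j2 \<longleftrightarrow> \<not> pleq (center s i1 j1) (center s i2 j2)"

definition close_pair :: "nat \<Rightarrow> nat \<Rightarrow> nat \<Rightarrow> nat \<Rightarrow> nat \<Rightarrow> bool" where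
  "close_pair s i1 j1 i2 j2 \<longleftrightarrow> pleq (center s i1 j1) (center s i2 j2)
     \<and> dist (center s i1 j1) (center s i2 j2) < sqrt (side s)"

definition nondiag_pair :: "nat \<Rightarrow> nat \<Rightarrow> nat \<Rightarrow> nat \<Rightarrow> nat \<Rightarrow> bool" where
  "nondiag_pair s i1 j1 i2 j2 \<longleftrightarrow> pleq (center s i1 j1) (center s i2 j2)
     \<and> sqrt (side s) \<le> dist (center s i1 j1) (center s i2 j2)
     \<and> (\<forall>b a. traverses (grid_box s i1 j1) (grid_box s i2 j2) b a \<longrightarrow> hat a < side s powr (1/5))"

definition good_pair :: "nat \<Rightarrow> nat \<Rightarrow> nat \<Rightarrow> nat \<Rightarrow> nat \<Rightarrow> bool" where
  "good_pair s i1 j1 i2 j2 \<longleftrightarrow> \<not> null_pair s i1 j1 i2 j2 \<and> \<not> close_pair s i1 j1 i2 j2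
     \<and> \<not> nondiag_pair s i1 j1 i2 j2"

definition Lpart :: "(real \<times> real) set \<Rightarrow> (real \<times> real) set \<Rightarrow> real \<times> real \<Rightarrow> real \<times> real
     \<Rightarrow> (real \<times> real) set \<Rightarrow> real \<times> real \<Rightarrow> real" where
  "Lpart B1 B2 c1 c2 B c = Sup {\<bar>lam b a p - lam bc ac c\<bar> | b a p bc ac.
      traverses B1 B2 b a \<and> p \<in> lineof b a \<inter> B \<and>
      inLc bc ac \<and> c1 \<in> lineof bc ac \<and> c2 \<in> lineof bc ac}"

definition Lval :: "nat \<Rightarrow> nat \<Rightarrow> nat \<Rightarrow> nat \<Rightarrow> nat \<Rightarrow> real" where
  "Lval s i1 j1 i2 j2 =
     max (Lpart (grid_box s i1 j1) (grid_box s i2 j2) (center s i1 j1) (center s i2 j2)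
            (grid_box s i1 j1) (center s i1 j1))
         (Lpart (grid_box s i1 j1) (grid_box s i2 j2) (center s i1 j1) (center s i2 j2)
            (grid_box s i2 j2) (center s i2 j2))"

end

theory Submission
  imports Defs
begin

(* The parameter of a point z on a line of positive slope with unit direction a is
   (z1 + z2) / (a1 + a2), and 1 / (a1 + a2) = |v| / (v1 + v2) for every chord v of the line.
   Writing |v| / (v1 + v2) = sqrt ((1 + tau^2) / 2) with tau = (v1 - v2) / (v1 + v2), a perturbation
   of the chord by at most e per coordinate changes this ratio by at most e / (v1 + v2).  Two lines
   through points of the same two boxes have chords differing by at most 2u per coordinate.  For
   s <= 5 the crude bounds 1 / sqrt 2 <= |v| / (v1 + v2) <= 1 already give sqrt 2 u + 4 sqrt u; for
   s >= 6 the steepness condition on some traversing line forces both index gaps of a good pair to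
   be at least 3, and together with the distance sqrt u of the centres this makes the chord long
   enough.  The bound on L follows by comparing a traversing line with the line through the centres. *)

lemma side_pos: "0 < side s"
  by (simp add: side_def)

lemma side_le_1: "side s \<le> 1"
  by (simp add: side_def)

lemma side_antimono: "k \<le> s \<Longrightarrow> side s \<le> side k"
  by (simp add: side_def frac_le)

lemma mem_grid_box:
  "p \<in> grid_box s i j \<longleftrightarrow>
     real i * side s \<le> fst p \<and> fst p \<le> real i * side s + side s \<and>
     real j * side s \<le> snd p \<and> snd p \<le> real j * side s + side s"
  by (cases p) (auto simp: grid_box_def algebra_simps)

lemma grid_box_in_unit_square:
  assumes "i < 2^s" "j < 2^s" "p \<in> grid_box s i j"
  shows "0 \<le> fst p \<and> fst p \<le> 1 \<and> 0 \<le> snd p \<and> snd p \<le> 1"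
proof -
  have upper: "real k * side s + side s \<le> 1" if "k < 2^s" for k
  proof -
    have "real k + 1 \<le> 2^s"
      using that by (metis Suc_leI of_nat_Suc of_nat_le_iff of_nat_numeral of_nat_power add.commute)
    then show ?thesis by (simp add: side_def field_simps)
  qed
  have "0 \<le> real i * side s" "0 \<le> real j * side s"
    using side_pos[of s] by simp_all
  then show ?thesis
    using assms(3) upper[OF assms(1)] upper[OF assms(2)] unfolding mem_grid_box by linarith
qed

lemma grid_box_coord_dist:
  assumes "p \<in> grid_box s i j" "p' \<in> grid_box s i j"
  shows "\<bar>fst p - fst p'\<bar> \<le> side s \<and> \<bar>snd p - snd p'\<bar> \<le> side s"
  using assms unfolding mem_grid_box by auto

lemma center_in_grid_box: "center s i j \<in> grid_box s i j"
  using side_pos[of s] unfolding mem_grid_box by (simp add: center_def algebra_simps)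

definition l2_l1_ratio :: "real \<times> real \<Rightarrow> real" where
  "l2_l1_ratio v = norm v / (fst v + snd v)"

lemma norm_pair_eq: "norm (v :: real \<times> real) = sqrt ((fst v)^2 + (snd v)^2)"
  by (simp add: norm_prod_def)

lemma l2_l1_ratio_scaleR:
  assumes "0 < t"
  shows "l2_l1_ratio (t *\<^sub>R v) = l2_l1_ratio v"
proof -
  have "fst (t *\<^sub>R v) + snd (t *\<^sub>R v) = t * (fst v + snd v)"
    by (simp add: algebra_simps)
  then show ?thesis
    using assms by (simp add: l2_l1_ratio_def)
qed

lemma l2_l1_ratio_bounds:
  assumes "0 \<le> fst v" "0 \<le> snd v" "0 < fst v + snd v"
  shows "1 / sqrt 2 \<le> l2_l1_ratio v \<and> l2_l1_ratio v \<le> 1"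
proof -
  have "sqrt ((fst v)^2 + (snd v)^2) \<le> fst v + snd v"
    using assms by (intro real_le_lsqrt) (auto simp: power2_eq_square algebra_simps)
  moreover have "(fst v + snd v)^2 \<le> 2 * ((fst v)^2 + (snd v)^2)"
    using zero_le_power2[of "fst v - snd v"] by (simp add: power2_eq_square algebra_simps)
  then have "fst v + snd v \<le> sqrt 2 * sqrt ((fst v)^2 + (snd v)^2)"
    by (metis real_le_rsqrt real_sqrt_mult)
  ultimately show ?thesis
    using assms by (simp add: l2_l1_ratio_def norm_pair_eq field_simps)
qed

lemma l2_l1_ratio_nonneg_le_1:
  assumes "0 \<le> fst v" "0 \<le> snd v" "0 < fst v + snd v"
  shows "0 \<le> l2_l1_ratio v \<and> l2_l1_ratio v \<le> 1"
  using l2_l1_ratio_bounds[OF assms] by (smt (verit) zero_le_divide_1_iff real_sqrt_ge_zero)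

lemma l2_l1_ratio_eq_tilt:
  assumes "0 \<le> fst v" "0 \<le> snd v" "0 < fst v + snd v"
  shows "l2_l1_ratio v = sqrt ((1 + ((fst v - snd v) / (fst v + snd v))^2) / 2)"
proof -
  have "(fst v + snd v)^2 + (fst v - snd v)^2 = 2 * ((fst v)^2 + (snd v)^2)"
    by (simp add: power2_eq_square algebra_simps)
  then have tilt: "(1 + ((fst v - snd v) / (fst v + snd v))^2) / 2
      = ((fst v)^2 + (snd v)^2) / (fst v + snd v)^2"
    using assms by (simp add: field_simps)
  show ?thesis
    unfolding tilt l2_l1_ratio_def norm_pair_eq using assms by (simp add: real_sqrt_divide)
qed

lemma sqrt_half_one_plus_square_lipschitz:
  fixes x y :: real
  assumes "\<bar>x\<bar> \<le> 1" "\<bar>y\<bar> \<le> 1"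
  shows "\<bar>sqrt ((1 + x^2) / 2) - sqrt ((1 + y^2) / 2)\<bar> \<le> \<bar>x - y\<bar> / 2"
proof -
  define X Y where "X = sqrt ((1 + x^2) / 2)" and "Y = sqrt ((1 + y^2) / 2)"
  have "\<bar>x\<bar> \<le> X" "\<bar>y\<bar> \<le> Y"
    using assms unfolding X_def Y_def
    by (auto intro!: real_le_rsqrt simp: abs_square_le_1)
  have "0 < X" "0 < Y"
    unfolding X_def Y_def by (simp_all add: add_pos_nonneg)
  have difference_of_squares: "(X - Y) * (X + Y) = (x - y) * (x + y) / 2"
  proof -
    have "X^2 = (1 + x^2) / 2" "Y^2 = (1 + y^2) / 2"
      unfolding X_def Y_def by simp_all
    then show ?thesis
      by (simp add: power2_eq_square field_simps)
  qed
  have "\<bar>X - Y\<bar> * (X + Y) = \<bar>(X - Y) * (X + Y)\<bar>"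
    using \<open>0 < X\<close> \<open>0 < Y\<close> by (simp add: abs_mult)
  also have "\<dots> = \<bar>x - y\<bar> * \<bar>x + y\<bar> / 2"
    unfolding difference_of_squares by (simp add: abs_mult)
  also have "\<dots> \<le> \<bar>x - y\<bar> / 2 * (X + Y)"
    using \<open>\<bar>x\<bar> \<le> X\<close> \<open>\<bar>y\<bar> \<le> Y\<close> abs_triangle_ineq[of x y]
    by (simp add: mult_left_mono)
  finally show ?thesis
    using \<open>0 < X\<close> \<open>0 < Y\<close>
    unfolding X_def Y_def by simp
qed

lemma tilt_abs_le_1:
  fixes v1 v2 :: real
  assumes "0 \<le> v1" "0 \<le> v2" "0 < v1 + v2"
  shows "\<bar>(v1 - v2) / (v1 + v2)\<bar> \<le> 1"
  using assms by (simp add: abs_le_iff divide_le_eq le_divide_eq)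

lemma tilt_lipschitz:
  fixes v1 v2 w1 w2 e :: real
  assumes "0 \<le> v1" "0 \<le> v2" "0 < v1 + v2" "0 < w1 + w2"
    and "\<bar>v1 - w1\<bar> \<le> e" "\<bar>v2 - w2\<bar> \<le> e"
  shows "\<bar>(v1 - v2) / (v1 + v2) - (w1 - w2) / (w1 + w2)\<bar> \<le> 2 * e / (w1 + w2)"
proof -
  define D where "D = v1 * (w2 - v2) - v2 * (w1 - v1)"
  have "(v1 - v2) / (v1 + v2) - (w1 - w2) / (w1 + w2) = 2 * D / ((v1 + v2) * (w1 + w2))"
    using assms(3,4) unfolding D_def by (simp add: field_simps)
  then have "\<bar>(v1 - v2) / (v1 + v2) - (w1 - w2) / (w1 + w2)\<bar> = 2 * \<bar>D\<bar> / ((v1 + v2) * (w1 + w2))"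
    using assms(3,4) by (simp add: abs_mult)
  also have "\<bar>D\<bar> \<le> (v1 + v2) * e"
  proof -
    have "\<bar>D\<bar> \<le> v1 * \<bar>w2 - v2\<bar> + v2 * \<bar>w1 - v1\<bar>"
      unfolding D_def using assms(1,2) abs_triangle_ineq4 by (metis abs_mult abs_of_nonneg)
    also have "\<dots> \<le> v1 * e + v2 * e"
      using assms by (intro add_mono mult_left_mono) (auto simp: abs_minus_commute)
    finally show ?thesis
      by (simp add: algebra_simps)
  qed
  also have "2 * ((v1 + v2) * e) / ((v1 + v2) * (w1 + w2)) = 2 * e / (w1 + w2)"
    using assms(3) by simp
  finally show ?thesis
    using assms(3,4) by (simp add: divide_right_mono)
qed

lemma l2_l1_ratio_lipschitz:
  assumes "0 \<le> fst v" "0 \<le> snd v" "0 < fst v + snd v"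
    and "0 \<le> fst w" "0 \<le> snd w" "0 < fst w + snd w"
    and "\<bar>fst v - fst w\<bar> \<le> e" "\<bar>snd v - snd w\<bar> \<le> e"
  shows "\<bar>l2_l1_ratio v - l2_l1_ratio w\<bar> \<le> e / (fst w + snd w)"
  using sqrt_half_one_plus_square_lipschitz[OF tilt_abs_le_1[OF assms(1-3)] tilt_abs_le_1[OF assms(4-6)]]
    tilt_lipschitz[OF assms(1-3,6-8)]
  unfolding l2_l1_ratio_eq_tilt[OF assms(1-3)] l2_l1_ratio_eq_tilt[OF assms(4-6)]
  by simp

lemma inL_imp_inLc: "inL b a \<Longrightarrow> inLc b a"
  by (simp add: inL_def inLc_def)

lemma inLc_direction_sum_pos:
  assumes "inLc b a"
  shows "0 < fst a + snd a"
proof (rule ccontr)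
  assume "\<not> 0 < fst a + snd a"
  then have "a = 0"
    using assms by (auto simp: inLc_def prod_eq_iff)
  then show False
    using assms by (simp add: inLc_def)
qed

lemma lam_on_line:
  assumes "inLc b a" "z \<in> lineof b a"
  shows "lam b a z = (fst z + snd z) * l2_l1_ratio a"
proof -
  obtain t where z: "z = b + t *\<^sub>R a"
    using assms(2) by (auto simp: lineof_def)
  have "lam b a z = t"
    using assms(1) by (simp add: lam_def z inLc_def flip: power2_norm_eq_inner)
  moreover have "fst z + snd z = t * (fst a + snd a)"
    using assms(1) by (simp add: z inLc_def algebra_simps)
  ultimately show ?thesis
    using assms(1) inLc_direction_sum_pos[OF assms(1)] by (simp add: l2_l1_ratio_def inLc_def)
qed

lemma chord_eq_scaleR_direction:
  assumes "inLc b a" "x \<in> lineof b a" "y \<in> lineof b a" "pless x y"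
  obtains t where "0 < t" "y - x = t *\<^sub>R a"
proof -
  obtain tx ty where "x = b + tx *\<^sub>R a" "y = b + ty *\<^sub>R a"
    using assms(2,3) by (auto simp: lineof_def)
  then have chord: "y - x = (ty - tx) *\<^sub>R a"
    by (simp add: algebra_simps)
  have "0 < (ty - tx) * fst a"
    using assms(4) arg_cong[OF chord, of fst] by (simp add: pless_def)
  then have "0 < ty - tx"
    using assms(1) by (simp add: inLc_def zero_less_mult_iff)
  with chord show ?thesis
    using that by blast
qed

lemma lam_via_chord:
  assumes "inLc b a" "x \<in> lineof b a" "y \<in> lineof b a" "pless x y" "z \<in> lineof b a"
  shows "lam b a z = (fst z + snd z) * l2_l1_ratio (y - x)"
proof -
  obtain t where "0 < t" "y - x = t *\<^sub>R a"
    using chord_eq_scaleR_direction[OF assms(1-4)] .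
  then show ?thesis
    using lam_on_line[OF assms(1,5)] by (simp add: l2_l1_ratio_scaleR)
qed

lemma lam_on_line_bounds:
  assumes "inLc b a" "z \<in> lineof b a" "0 \<le> fst z + snd z" "fst z + snd z \<le> 2"
  shows "0 \<le> lam b a z \<and> lam b a z \<le> 2"
proof -
  have "0 \<le> l2_l1_ratio a" "l2_l1_ratio a \<le> 1"
    using l2_l1_ratio_nonneg_le_1 inLc_direction_sum_pos[OF assms(1)] assms(1) by (simp_all add: inLc_def)
  moreover have "(fst z + snd z) * l2_l1_ratio a \<le> 2 * 1"
    using assms(3,4) calculation by (intro mult_mono) auto
  ultimately show ?thesis
    using assms(3) lam_on_line[OF assms(1,2)] by simp
qed

lemma line_through_ordered_points:
  assumes "pleq x y" "x \<noteq> y"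
  obtains b a where "inLc b a" "x \<in> lineof b a" "y \<in> lineof b a"
proof -
  define a where "a = (1 / norm (y - x)) *\<^sub>R (y - x)"
  have "0 < norm (y - x)"
    using assms(2) by simp
  then have "0 < fst a + snd a"
    using assms unfolding a_def pleq_def
    by (auto simp: prod_eq_iff add_pos_nonneg add_nonneg_pos simp flip: add_divide_distrib)
  define t where "t = (fst x + snd x) / (fst a + snd a)"
  define b where "b = x - t *\<^sub>R a"
  have "t * (fst a + snd a) = fst x + snd x"
    using \<open>0 < fst a + snd a\<close> by (simp add: t_def)
  then have "fst b = - snd b"
    by (simp add: b_def algebra_simps)
  moreover have "norm a = 1" "0 \<le> fst a" "0 \<le> snd a"
    using \<open>0 < norm (y - x)\<close> assms(1) by (simp_all add: a_def pleq_def)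
  ultimately have "inLc b a"
    by (simp add: inLc_def)
  moreover have "x = b + t *\<^sub>R a"
    by (simp add: b_def)
  moreover have "norm (y - x) *\<^sub>R a = y - x"
    using \<open>0 < norm (y - x)\<close> by (simp add: a_def)
  then have "y = b + (t + norm (y - x)) *\<^sub>R a"
    by (simp add: b_def scaleR_add_left)
  ultimately show ?thesis
    using that unfolding lineof_def by blast
qed

lemma grid_box_coord_diff:
  assumes "p \<in> grid_box s i1 j1" "q \<in> grid_box s i2 j2"
  shows "(real i2 - real i1 - 1) * side s \<le> fst q - fst p \<and>
         fst q - fst p \<le> (real i2 - real i1 + 1) * side s \<and>
         (real j2 - real j1 - 1) * side s \<le> snd q - snd p \<and>
         snd q - snd p \<le> (real j2 - real j1 + 1) * side s"
  using assms unfolding mem_grid_box by (auto simp: algebra_simps)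

lemma good_pair_centers_pleq: "good_pair s i1 j1 i2 j2 \<Longrightarrow> i1 \<le> i2 \<and> j1 \<le> j2"
  using side_pos[of s]
  by (simp add: good_pair_def null_pair_def pleq_def center_def)

lemma good_pair_index_dist:
  assumes "good_pair s i1 j1 i2 j2"
  shows "2^s \<le> (real i2 - real i1)^2 + (real j2 - real j1)^2"
proof -
  define n where "n = (real i2 - real i1)^2 + (real j2 - real j1)^2"
  have "(dist (center s i1 j1) (center s i2 j2))^2
      = (fst (center s i1 j1) - fst (center s i2 j2))^2 + (snd (center s i1 j1) - snd (center s i2 j2))^2"
    by (simp add: dist_norm norm_pair_eq)
  also have "\<dots> = (side s)^2 * n"
    by (simp add: center_def n_def power2_eq_square algebra_simps)
  finally have "(dist (center s i1 j1) (center s i2 j2))^2 = (side s)^2 * n" .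
  moreover have "sqrt (side s) \<le> dist (center s i1 j1) (center s i2 j2)"
    using assms by (auto simp: good_pair_def null_pair_def close_pair_def)
  then have "(sqrt (side s))^2 \<le> (dist (center s i1 j1) (center s i2 j2))^2"
    by (rule power_mono) (simp add: less_imp_le[OF side_pos])
  ultimately have "side s \<le> (side s)^2 * n"
    using side_pos[of s] by simp
  then have "1 \<le> side s * n"
    using side_pos[of s] by (simp add: power2_eq_square n_def)
  then show ?thesis
    by (simp add: n_def side_def field_simps)
qed

lemma square_fifth_root_gt:
  fixes u :: real
  assumes "0 < u" "u \<le> 1/64"
  shows "12 * u < (u powr (1/5))^2"
proof (rule ccontr)
  assume "\<not> 12 * u < (u powr (1/5))^2"
  then have "((u powr (1/5))^2)^5 \<le> (12 * u)^5"
    by (intro power_mono) auto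
  moreover have "((u powr (1/5))^2)^5 = u^2"
    using assms(1) by (simp add: powr_power flip: power_mult)
  moreover have "(12 * u)^5 = u^2 * (248832 * u^3)"
    by (simp add: power_mult_distrib eval_nat_numeral)
  ultimately have "u^2 * 1 \<le> u^2 * (248832 * u^3)"
    by (metis mult_1_right)
  then have "1 \<le> 248832 * u^3"
    using assms(1) by (simp add: mult_le_cancel_left_pos)
  moreover have "u^3 \<le> (1/64)^3"
    using assms by (intro power_mono) auto
  then have "u^3 \<le> 1/262144"
    by (simp add: power_divide)
  ultimately show False
    by linarith
qed

lemma flat_chord_not_steep:
  fixes a1 a2 t u K M :: real
  assumes a: "0 < a1" "0 < a2" "a1^2 + a2^2 = 1"
    and u: "0 < u" "u \<le> 1/64"
    and KM: "1 / u \<le> K^2 + M^2" "0 \<le> K" "0 \<le> M" "M \<le> 2"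
    and chord: "(K - 1) * u \<le> t * a1" "t * a2 \<le> (M + 1) * u"
  shows "a2 < u powr (1/5)"
proof -
  have "M^2 \<le> 2^2"
    using KM by (intro power_mono) auto
  then have K2: "1 / u - 4 \<le> K^2"
    using KM(1) by simp
  have "64 \<le> 1 / u"
    using u by (simp add: field_simps)
  have "7 \<le> K"
  proof (rule ccontr)
    assume "\<not> 7 \<le> K"
    then have "K^2 < 7^2"
      using KM(2) by (intro power_strict_mono) auto
    then show False
      using K2 \<open>64 \<le> 1 / u\<close> by simp
  qed
  have "(K - 1) * u * a2 \<le> t * a1 * a2"
    using chord(1) a(2) by (simp add: mult_right_mono)
  also have "\<dots> = (t * a2) * a1"
    by simp
  also have "\<dots> \<le> 3 * u * a1"
  proof -
    have "(M + 1) * u \<le> 3 * u"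
      using KM(4) u(1) by (intro mult_right_mono) auto
    then have "t * a2 \<le> 3 * u"
      using chord(2) by linarith
    then show ?thesis
      using a(1) by (simp add: mult_right_mono)
  qed
  finally have "(K - 1) * a2 \<le> 3 * a1"
    using u(1) by (simp add: mult.assoc mult.left_commute[of u])
  then have "((K - 1) * a2)^2 \<le> (3 * a1)^2"
    using \<open>7 \<le> K\<close> a(2) by (intro power_mono) auto
  then have "(K - 1)^2 * a2^2 \<le> 9 * a1^2"
    by (simp add: power_mult_distrib)
  then have "((K - 1)^2 + 9) * a2^2 \<le> 9"
    unfolding distrib_right using a(3) by linarith
  moreover have "3 / (4 * u) \<le> (K - 1)^2 + 9"
    using K2 zero_le_power2[of "K - 4"] by (simp add: power2_eq_square field_simps)
  ultimately have "3 / (4 * u) * a2^2 \<le> 9"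
    by (meson mult_right_mono order_trans zero_le_power2)
  then have "a2^2 \<le> 12 * u"
    using u(1) by (simp add: field_simps)
  also have "\<dots> < (u powr (1/5))^2"
    using square_fifth_root_gt[OF u] .
  finally show ?thesis
    using power2_less_imp_less by fastforce
qed

lemma good_pair_steep_traversal:
  assumes "good_pair s i1 j1 i2 j2"
  obtains b a where "traverses (grid_box s i1 j1) (grid_box s i2 j2) b a"
    "side s powr (1/5) \<le> hat a"
  using assms that by (force simp: good_pair_def nondiag_pair_def close_pair_def null_pair_def)

lemma good_pair_index_gaps:
  assumes good: "good_pair s i1 j1 i2 j2" and "6 \<le> s"
  shows "3 \<le> real i2 - real i1 \<and> 3 \<le> real j2 - real j1"
proof -
  define K M where "K = real i2 - real i1" and "M = real j2 - real j1"
  obtain b a where traversal: "traverses (grid_box s i1 j1) (grid_box s i2 j2) b a"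
    and steep: "side s powr (1/5) \<le> hat a"
    using good_pair_steep_traversal[OF good] .
  obtain x y where x: "x \<in> lineof b a" "x \<in> grid_box s i1 j1"
    and y: "y \<in> lineof b a" "y \<in> grid_box s i2 j2"
    using traversal by (auto simp: traverses_def)
  obtain tx ty where "x = b + tx *\<^sub>R a" "y = b + ty *\<^sub>R a"
    using x(1) y(1) by (auto simp: lineof_def)
  then have chord: "fst y - fst x = (ty - tx) * fst a" "snd y - snd x = (ty - tx) * snd a"
    by (simp_all add: algebra_simps)
  have a: "0 < fst a" "0 < snd a" "(fst a)^2 + (snd a)^2 = 1"
    using traversal by (auto simp: traverses_def inL_def norm_pair_eq)
  have u: "0 < side s" "side s \<le> 1/64"
    using side_pos side_antimono[OF \<open>6 \<le> s\<close>] by (simp_all add: side_def)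
  have KM: "1 / side s \<le> K^2 + M^2" "0 \<le> K" "0 \<le> M"
    using good_pair_index_dist[OF good] good_pair_centers_pleq[OF good]
    by (simp_all add: K_def M_def side_def)
  have gaps: "(K - 1) * side s \<le> (ty - tx) * fst a" "(ty - tx) * fst a \<le> (K + 1) * side s"
    "(M - 1) * side s \<le> (ty - tx) * snd a" "(ty - tx) * snd a \<le> (M + 1) * side s"
    using grid_box_coord_diff[OF x(2) y(2)] unfolding chord K_def M_def by auto
  have "side s powr (1/5) \<le> fst a" "side s powr (1/5) \<le> snd a"
    using steep by (simp_all add: hat_def)
  moreover have "snd a < side s powr (1/5)" if "M \<le> 2"
    using flat_chord_not_steep[OF a u KM that gaps(1,4)] .
  moreover have "fst a < side s powr (1/5)" if "K \<le> 2"
    using flat_chord_not_steep[of "snd a" "fst a" "side s" M K] a u KM that gaps(3,2)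
    by (simp add: add.commute)
  moreover have "K \<le> 2 \<or> 3 \<le> K"
    unfolding K_def by (cases "i2 \<le> i1 + 2") auto
  moreover have "M \<le> 2 \<or> 3 \<le> M"
    unfolding M_def by (cases "j2 \<le> j1 + 2") auto
  ultimately show ?thesis
    unfolding K_def M_def by fastforce
qed

lemma good_pair_boxes_pless:
  assumes "good_pair s i1 j1 i2 j2" "6 \<le> s" "p \<in> grid_box s i1 j1" "q \<in> grid_box s i2 j2"
  shows "pless p q"
proof -
  have "0 < (real i2 - real i1 - 1) * side s" "0 < (real j2 - real j1 - 1) * side s"
    using good_pair_index_gaps[OF assms(1,2)] side_pos[of s] by simp_all
  then show ?thesis
    using grid_box_coord_diff[OF assms(3,4)] by (simp add: pless_def)
qed

lemma good_pair_center_line: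
  assumes "good_pair s i1 j1 i2 j2"
  obtains bc ac where "inLc bc ac" "center s i1 j1 \<in> lineof bc ac" "center s i2 j2 \<in> lineof bc ac"
proof (rule line_through_ordered_points)
  show "pleq (center s i1 j1) (center s i2 j2)"
    using assms by (simp add: good_pair_def null_pair_def)
  have "0 < dist (center s i1 j1) (center s i2 j2)"
    using assms side_pos[of s] by (auto simp: good_pair_def close_pair_def null_pair_def
        intro: less_le_trans[of 0 "sqrt (side s)"])
  then show "center s i1 j1 \<noteq> center s i2 j2"
    by auto
qed (use that in auto)

lemma sqrt_2_ge: "707 / 500 \<le> sqrt 2"
  by (rule real_le_rsqrt) (simp add: power2_eq_square)

lemma small_scale_estimate:
  fixes u :: real
  assumes "1/32 \<le> u" "u \<le> 1"
  shows "2 * u + 2 * (1 - 1 / sqrt 2) \<le> sqrt 2 * u + 4 * sqrt u"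
proof -
  have "22 / 125 \<le> sqrt u"
    using assms(1) by (intro real_le_rsqrt) (simp add: power2_eq_square)
  moreover have "u \<le> sqrt u"
    using assms by (intro real_le_rsqrt) (simp add: power2_eq_square mult_le_one)
  moreover have "2 * (1 - 1 / sqrt 2) = 2 - sqrt 2"
    by (simp add: field_simps)
  moreover have "707 / 500 * u \<le> sqrt 2 * u"
    using sqrt_2_ge assms(1) by (intro mult_right_mono) auto
  ultimately show ?thesis
    using sqrt_2_ge by linarith
qed

lemma large_scale_estimate:
  fixes r D :: real
  assumes r: "0 < r" "r \<le> 1/8" and D: "1 \<le> D" "1 / r^2 - 9 \<le> (D - 1)^2"
  shows "2 * r^2 + 4 / D \<le> sqrt 2 * r^2 + 4 * r"
proof -
  define n where "n = 1 / r"
  have "8 \<le> n"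
    using r by (simp add: n_def field_simps)
  have "n - 21/25 \<le> D - 1"
  proof (rule ccontr)
    assume "\<not> n - 21/25 \<le> D - 1"
    then have "(D - 1)^2 < (n - 21/25)^2"
      using D(1) by (intro power_strict_mono) auto
    also have "\<dots> < n^2 - 9"
      using \<open>8 \<le> n\<close> by (simp add: power2_eq_square algebra_simps)
    finally show False
      using D(2) by (simp add: n_def power_divide)
  qed
  then have "4 / D \<le> 4 / (n + 4/25)"
    using \<open>8 \<le> n\<close> by (intro divide_left_mono) auto
  also have "\<dots> = 4 * r / (1 + 4/25 * r)"
    using r(1) by (simp add: n_def field_simps)
  also have "\<dots> \<le> 4 * r - (2 - sqrt 2) * r^2"
  proof -
    have "(2 - sqrt 2) * (1 + 4/25 * r) \<le> 293/500 * (51/50)"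
      using sqrt_2_ge r by (intro mult_mono) auto
    then have "(2 - sqrt 2) * (1 + 4/25 * r) * r^2 \<le> 16/25 * r^2"
      by (intro mult_right_mono) auto
    moreover have "(4 * r - (2 - sqrt 2) * r^2) * (1 + 4/25 * r)
        = 4 * r + 16/25 * r^2 - (2 - sqrt 2) * (1 + 4/25 * r) * r^2"
      by (simp add: field_simps power2_eq_square)
    ultimately have "4 * r \<le> (4 * r - (2 - sqrt 2) * r^2) * (1 + 4/25 * r)"
      by linarith
    then show ?thesis
      using r(1) by (simp add: pos_divide_le_eq)
  qed
  finally show ?thesis
    by (simp add: algebra_simps)
qed

lemma abs_mult_diff_le:
  fixes x x' y y' d c :: real
  assumes "\<bar>x - x'\<bar> \<le> d" "0 \<le> x'" "x' \<le> c" "0 \<le> y" "y \<le> 1"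
  shows "\<bar>x * y - x' * y'\<bar> \<le> d + c * \<bar>y - y'\<bar>"
proof -
  have "x * y - x' * y' = (x - x') * y + x' * (y - y')"
    by (simp add: algebra_simps)
  then have "\<bar>x * y - x' * y'\<bar> \<le> \<bar>x - x'\<bar> * y + x' * \<bar>y - y'\<bar>"
    using abs_triangle_ineq[of "(x - x') * y" "x' * (y - y')"] assms(2,4)
    by (simp add: abs_mult)
  also have "\<dots> \<le> d * 1 + c * \<bar>y - y'\<bar>"
    using assms by (intro add_mono mult_mono) auto
  finally show ?thesis
    by simp
qed

lemma good_pair_l2_l1_ratio_diff:
  assumes good: "good_pair s i1 j1 i2 j2"
    and boxes: "p \<in> grid_box s i1 j1" "q \<in> grid_box s i2 j2"
      "p' \<in> grid_box s i1 j1" "q' \<in> grid_box s i2 j2"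
    and "pless p q" "pless p' q'"
  shows "2 * side s + 2 * \<bar>l2_l1_ratio (q - p) - l2_l1_ratio (q' - p')\<bar>
    \<le> sqrt 2 * side s + 4 * sqrt (side s)"
proof -
  define v w where "v = q - p" and "w = q' - p'"
  have v: "0 \<le> fst v" "0 \<le> snd v" "0 < fst v + snd v"
    using \<open>pless p q\<close> by (auto simp: v_def pless_def)
  have w: "0 \<le> fst w" "0 \<le> snd w" "0 < fst w + snd w"
    using \<open>pless p' q'\<close> by (auto simp: w_def pless_def)
  show ?thesis
  proof (cases "s \<le> 5")
    case True
    have "\<bar>l2_l1_ratio v - l2_l1_ratio w\<bar> \<le> 1 - 1 / sqrt 2"
      using l2_l1_ratio_bounds[OF v] l2_l1_ratio_bounds[OF w] by (simp add: abs_le_iff)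
    moreover have "1/32 \<le> side s"
      using side_antimono[OF True] by (simp add: side_def)
    ultimately show ?thesis
      using small_scale_estimate[OF _ side_le_1] unfolding v_def w_def by fastforce
  next
    case False
    define K M where "K = real i2 - real i1" and "M = real j2 - real j1"
    have KM: "3 \<le> K" "3 \<le> M" "1 / side s \<le> K^2 + M^2"
      using good_pair_index_gaps[OF good] good_pair_index_dist[OF good] False
      by (simp_all add: K_def M_def side_def)
    have "\<bar>fst v - fst w\<bar> \<le> 2 * side s" "\<bar>snd v - snd w\<bar> \<le> 2 * side s"
      using grid_box_coord_dist[OF boxes(1,3)] grid_box_coord_dist[OF boxes(2,4)]
      by (auto simp: v_def w_def abs_le_iff)
    then have "\<bar>l2_l1_ratio v - l2_l1_ratio w\<bar> \<le> 2 * side s / (fst w + snd w)"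
      using l2_l1_ratio_lipschitz[OF v w] by blast
    also have "\<dots> \<le> 2 * side s / ((K + M - 2) * side s)"
    proof (rule divide_left_mono)
      show "(K + M - 2) * side s \<le> fst w + snd w"
        using grid_box_coord_diff[OF boxes(3,4)] by (simp add: w_def K_def M_def algebra_simps)
      show "0 < (fst w + snd w) * ((K + M - 2) * side s)"
        using KM(1,2) side_pos[of s] w(3) by simp
    qed (simp add: less_imp_le[OF side_pos])
    also have "\<dots> = 2 / (K + M - 2)"
      using side_pos[of s] by simp
    finally have "2 * \<bar>l2_l1_ratio v - l2_l1_ratio w\<bar> \<le> 4 / (K + M - 2)"
      by simp
    moreover have "2 * sqrt (side s)^2 + 4 / (K + M - 2) \<le> sqrt 2 * sqrt (side s)^2 + 4 * sqrt (side s)"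
    proof (rule large_scale_estimate)
      show "0 < sqrt (side s)"
        using side_pos by simp
      have "side s \<le> 1/64"
        using side_antimono[of 6 s] False by (simp add: side_def)
      then show "sqrt (side s) \<le> 1/8"
        by (intro real_le_lsqrt) (simp_all add: power2_eq_square)
      show "1 \<le> K + M - 2"
        using KM by simp
      \<comment> \<open>this is where both index gaps must be at least 3\<close>
      have "K^2 + M^2 - 9 \<le> (K + M - 2 - 1)^2"
        using mult_nonneg_nonneg[of "K - 3" "M - 3"] KM(1,2) by (simp add: power2_eq_square algebra_simps)
      then show "1 / sqrt (side s)^2 - 9 \<le> (K + M - 2 - 1)^2"
        using KM(3) side_pos[of s] by simp
    qed
    ultimately show ?thesis
      using side_pos[of s] unfolding v_def w_def by simp
  qed
qed

lemma good_pair_lam_diff: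
  assumes good: "good_pair s i1 j1 i2 j2"
    and boxes: "p \<in> grid_box s i1 j1" "q \<in> grid_box s i2 j2"
      "p' \<in> grid_box s i1 j1" "q' \<in> grid_box s i2 j2"
    and ordered: "pless p q" "pless p' q'"
    and line: "inLc b a" "p \<in> lineof b a" "q \<in> lineof b a"
    and line': "inLc b' a'" "p' \<in> lineof b' a'" "q' \<in> lineof b' a'"
    and z: "z \<in> lineof b a" "z \<in> grid_box s i j"
    and z': "z' \<in> lineof b' a'" "z' \<in> grid_box s i j" "i < 2^s" "j < 2^s"
  shows "\<bar>lam b a z - lam b' a' z'\<bar> \<le> sqrt 2 * side s + 4 * sqrt (side s)"
proof -
  have "0 \<le> l2_l1_ratio (q - p)" "l2_l1_ratio (q - p) \<le> 1"
    using l2_l1_ratio_nonneg_le_1[of "q - p"] ordered(1) by (simp_all add: pless_def)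
  moreover have "\<bar>(fst z + snd z) - (fst z' + snd z')\<bar> \<le> 2 * side s"
    using grid_box_coord_dist[OF z(2) z'(2)] by (simp add: abs_le_iff)
  moreover have "0 \<le> fst z' + snd z'" "fst z' + snd z' \<le> 2"
    using grid_box_in_unit_square[OF z'(3,4,2)] by simp_all
  ultimately have "\<bar>(fst z + snd z) * l2_l1_ratio (q - p) - (fst z' + snd z') * l2_l1_ratio (q' - p')\<bar>
      \<le> 2 * side s + 2 * \<bar>l2_l1_ratio (q - p) - l2_l1_ratio (q' - p')\<bar>"
    by (intro abs_mult_diff_le)
  also have "\<dots> \<le> sqrt 2 * side s + 4 * sqrt (side s)"
    using good_pair_l2_l1_ratio_diff[OF good boxes ordered] .
  finally show ?thesis
    using lam_via_chord[OF line ordered(1) z(1)] lam_via_chord[OF line' ordered(2) z'(1)] by simp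
qed

lemma good_pair_traversal_lam_diff:
  assumes good: "good_pair s i1 j1 i2 j2"
    and traversal: "traverses (grid_box s i1 j1) (grid_box s i2 j2) b a"
    and center_line: "inLc bc ac" "center s i1 j1 \<in> lineof bc ac" "center s i2 j2 \<in> lineof bc ac"
    and p: "p \<in> lineof b a" "p \<in> grid_box s i j"
    and c: "c \<in> lineof bc ac" "c \<in> grid_box s i j" "i < 2^s" "j < 2^s"
  shows "\<bar>lam b a p - lam bc ac c\<bar> \<le> 12 * sqrt (side s)"
proof (cases "s \<le> 5")
  case True
  have "\<bar>lam b a p - lam bc ac c\<bar> \<le> 2"
    using lam_on_line_bounds[OF inL_imp_inLc p(1)] traversal lam_on_line_bounds[OF center_line(1) c(1)]
      grid_box_in_unit_square[OF c(3,4,2)] grid_box_in_unit_square[OF c(3,4) p(2)]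
    by (simp add: traverses_def abs_le_iff)
  also have "2 \<le> 12 * sqrt (side s)"
  proof -
    have "1/32 \<le> side s"
      using side_antimono[OF True] by (simp add: side_def)
    then have "1/6 \<le> sqrt (side s)"
      by (intro real_le_rsqrt) (simp add: power2_eq_square)
    then show ?thesis
      by simp
  qed
  finally show ?thesis .
next
  case False
  obtain x y where x: "x \<in> lineof b a" "x \<in> grid_box s i1 j1"
    and y: "y \<in> lineof b a" "y \<in> grid_box s i2 j2"
    using traversal by (auto simp: traverses_def)
  have "inLc b a"
    using traversal by (simp add: traverses_def inL_imp_inLc)
  have "6 \<le> s"
    using False by simp
  have "pless x y" "pless (center s i1 j1) (center s i2 j2)"
    using good_pair_boxes_pless[OF good \<open>6 \<le> s\<close>] x(2) y(2) center_in_grid_box by blast+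
  then have "\<bar>lam b a p - lam bc ac c\<bar> \<le> sqrt 2 * side s + 4 * sqrt (side s)"
    by (intro good_pair_lam_diff[OF good x(2) y(2) center_in_grid_box center_in_grid_box
          _ _ \<open>inLc b a\<close> x(1) y(1) center_line p c])
  also have "\<dots> \<le> 12 * sqrt (side s)"
  proof -
    have "side s \<le> sqrt (side s)"
      using side_pos[of s] side_le_1[of s] by (intro real_le_rsqrt) (simp add: power2_eq_square mult_le_one)
    moreover have "sqrt 2 \<le> 8"
      by (intro real_le_lsqrt) simp_all
    ultimately have "sqrt 2 * side s \<le> 8 * sqrt (side s)"
      using side_pos[of s] by (intro mult_mono) auto
    then show ?thesis
      by simp
  qed
  finally show ?thesis .
qed

lemma good_pair_Lpart_le:
  assumes good: "good_pair s i1 j1 i2 j2"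
    and ij: "(i, j) = (i1, j1) \<or> (i, j) = (i2, j2)" "i < 2^s" "j < 2^s"
  shows "Lpart (grid_box s i1 j1) (grid_box s i2 j2) (center s i1 j1) (center s i2 j2)
      (grid_box s i j) (center s i j) \<le> 12 * sqrt (side s)"
  unfolding Lpart_def
proof (rule cSup_least)
  obtain b a where traversal: "traverses (grid_box s i1 j1) (grid_box s i2 j2) b a"
    using good_pair_steep_traversal[OF good] .
  moreover obtain p where "p \<in> lineof b a \<inter> grid_box s i j"
    using traversal ij(1) by (auto simp: traverses_def)
  moreover obtain bc ac where "inLc bc ac" "center s i1 j1 \<in> lineof bc ac" "center s i2 j2 \<in> lineof bc ac"
    using good_pair_center_line[OF good] .
  ultimately show "{\<bar>lam b a p - lam bc ac (center s i j)\<bar> | b a p bc ac.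
      traverses (grid_box s i1 j1) (grid_box s i2 j2) b a \<and> p \<in> lineof b a \<inter> grid_box s i j \<and>
      inLc bc ac \<and> center s i1 j1 \<in> lineof bc ac \<and> center s i2 j2 \<in> lineof bc ac} \<noteq> {}"
    by blast
next
  fix x
  assume "x \<in> {\<bar>lam b a p - lam bc ac (center s i j)\<bar> | b a p bc ac.
      traverses (grid_box s i1 j1) (grid_box s i2 j2) b a \<and> p \<in> lineof b a \<inter> grid_box s i j \<and>
      inLc bc ac \<and> center s i1 j1 \<in> lineof bc ac \<and> center s i2 j2 \<in> lineof bc ac}"
  then obtain b a p bc ac where x: "x = \<bar>lam b a p - lam bc ac (center s i j)\<bar>"
    and traversal: "traverses (grid_box s i1 j1) (grid_box s i2 j2) b a"
    and p: "p \<in> lineof b a" "p \<in> grid_box s i j"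
    and center_line: "inLc bc ac" "center s i1 j1 \<in> lineof bc ac" "center s i2 j2 \<in> lineof bc ac"
    by blast
  have "center s i j \<in> lineof bc ac"
    using ij(1) center_line by auto
  then show "x \<le> 12 * sqrt (side s)"
    unfolding x
    by (rule good_pair_traversal_lam_diff[OF good traversal center_line p _ center_in_grid_box ij(2,3)])
qed

theorem lemma9:
  shows "(\<forall>s i1 j1 i2 j2 p q p' q' b a b' a'.
            i1 < 2^s \<and> j1 < 2^s \<and> i2 < 2^s \<and> j2 < 2^s \<and> good_pair s i1 j1 i2 j2 \<and>
            p \<in> grid_box s i1 j1 \<and> q \<in> grid_box s i2 j2 \<and>
            p' \<in> grid_box s i1 j1 \<and> q' \<in> grid_box s i2 j2 \<and>
            pless p q \<and> pless p' q' \<and>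
            inL b a \<and> p \<in> lineof b a \<and> q \<in> lineof b a \<and>
            inL b' a' \<and> p' \<in> lineof b' a' \<and> q' \<in> lineof b' a' \<longrightarrow>
              \<bar>lam b a p - lam b' a' p'\<bar> \<le> sqrt 2 * side s + 4 * sqrt (side s) \<and>
              \<bar>lam b a q - lam b' a' q'\<bar> \<le> sqrt 2 * side s + 4 * sqrt (side s))
         \<and> (\<exists>C. \<forall>s i1 j1 i2 j2.
            i1 < 2^s \<and> j1 < 2^s \<and> i2 < 2^s \<and> j2 < 2^s \<and> good_pair s i1 j1 i2 j2 \<longrightarrow>
              Lval s i1 j1 i2 j2 \<le> C * sqrt (side s))"
proof (intro conjI allI impI exI)
  fix s i1 j1 i2 j2 p q p' q' b a b' a'
  assume H: "i1 < 2^s \<and> j1 < 2^s \<and> i2 < 2^s \<and> j2 < 2^s \<and> good_pair s i1 j1 i2 j2 \<and>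
            p \<in> grid_box s i1 j1 \<and> q \<in> grid_box s i2 j2 \<and>
            p' \<in> grid_box s i1 j1 \<and> q' \<in> grid_box s i2 j2 \<and>
            pless p q \<and> pless p' q' \<and>
            inL b a \<and> p \<in> lineof b a \<and> q \<in> lineof b a \<and>
            inL b' a' \<and> p' \<in> lineof b' a' \<and> q' \<in> lineof b' a'"
  then have "inLc b a" "inLc b' a'"
    by (simp_all add: inL_imp_inLc)
  with H show "\<bar>lam b a p - lam b' a' p'\<bar> \<le> sqrt 2 * side s + 4 * sqrt (side s)"
    and "\<bar>lam b a q - lam b' a' q'\<bar> \<le> sqrt 2 * side s + 4 * sqrt (side s)"
    by (auto intro: good_pair_lam_diff)
next
  fix s i1 j1 i2 j2
  assume "i1 < 2^s \<and> j1 < 2^s \<and> i2 < 2^s \<and> j2 < 2^s \<and> good_pair s i1 j1 i2 j2"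
  then show "Lval s i1 j1 i2 j2 \<le> 12 * sqrt (side s)"
    unfolding Lval_def by (simp add: good_pair_Lpart_le)
qed

end
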